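(* Let $T,T'$ be one-to-one reduced linear trellises of the same length and let $f:T\to T'$ be an isomorphism of trellises. Then every $f_i:V_i(T)\to V_i(T')$ is linear, i.e. $f$ is a linear isomorphism. In particular, on a one-to-one reduced trellis there is exactly one vector space structure on each vertex set making it linear, up to the given labels (two such structures are related by the identity being a linear isomorphism).
   Context: Let $\mathbb{F}$ be a finite field and $n\ge1$; indices are taken in $\mathbb{Z}_n$. A trellis $T$ of length $n$ over $\mathbb{F}$ consists of pairwise disjoint finite vertex sets $V_i(T)$, $i\in\mathbb{Z}_n$, and edge sets $E_i(T)\subseteq V_i(T)\times\mathbb{F}\times V_{i+1}(T)$; $(v,\alpha,w)\in E_i(T)$ is an edge from $v$ to $w$ with label $\alpha$. Trellises are trim. $T$ is linear if each $V_i(T)$ is an $\mathbb{F}$-vector space and each $E_i(T)$ is a subspace. A cycle is a closed path of length $n$ starting in $V_0(T)$, identified with $(\mathbf{v},\boldsymbol{\alpha})\in\prod_iV_i(T)\times\mathbb{F}^n$; $\mathbb{S}(T)$ is the set of cycles, $L(\mathbf{v},\boldsymbol{\alpha})=\boldsymbol{\alpha}$, $C(T)=L(\mathbb{S}(T))$. $T$ is reduced if every edge lies on a cycle and one-to-one if $L:\mathbb{S}(T)\to C(T)$ is injective. An isomorphism $f:T\to T'$ is a family of bijections $f_i:V_i(T)\to V_i(T')$ with $(v,\alpha,w)\in E_i(T)\iff(f_i(v),\alpha,f_{i+1}(w))\in E_i(T')$. *)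

theory Defs
  imports "HOL-Algebra.Module"
begin

text \<open>Indices of Z_n are represented by natural numbers i < n; the successor of i
  is (i + 1) mod n.\<close>

definition trellis ::
  "('a, 'c) ring_scheme \<Rightarrow> nat \<Rightarrow> (nat \<Rightarrow> 'v set) \<Rightarrow> (nat \<Rightarrow> ('v \<times> 'a \<times> 'v) set) \<Rightarrow> bool" where
  "trellis R n V E \<longleftrightarrow>
     n \<ge> 1 \<and>
     (\<forall>i<n. finite (V i)) \<and>
     (\<forall>i<n. \<forall>j<n. i \<noteq> j \<longrightarrow> V i \<inter> V j = {}) \<and>
     (\<forall>i<n. E i \<subseteq> V i \<times> carrier R \<times> V ((i + 1) mod n)) \<and>
     \<comment> \<open>trim: every vertex has an outgoing and an incoming edge\<close>
     (\<forall>i<n. \<forall>v\<in>V i. (\<exists>a w. (v, a, w) \<in> E i)) \<and>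
     (\<forall>i<n. \<forall>w\<in>V ((i + 1) mod n). (\<exists>v a. (v, a, w) \<in> E i))"

text \<open>A cycle: a vertex sequence v and label sequence al (only indices < n matter).\<close>
definition is_cycle ::
  "nat \<Rightarrow> (nat \<Rightarrow> 'v set) \<Rightarrow> (nat \<Rightarrow> ('v \<times> 'a \<times> 'v) set) \<Rightarrow> (nat \<Rightarrow> 'v) \<Rightarrow> (nat \<Rightarrow> 'a) \<Rightarrow> bool" where
  "is_cycle n V E v al \<longleftrightarrow>
     (\<forall>i<n. v i \<in> V i \<and> (v i, al i, v ((i + 1) mod n)) \<in> E i)"

definition reduced ::
  "nat \<Rightarrow> (nat \<Rightarrow> 'v set) \<Rightarrow> (nat \<Rightarrow> ('v \<times> 'a \<times> 'v) set) \<Rightarrow> bool" where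
  "reduced n V E \<longleftrightarrow>
     (\<forall>i<n. \<forall>e\<in>E i. \<exists>v al. is_cycle n V E v al \<and> e = (v i, al i, v ((i + 1) mod n)))"

text \<open>One-to-one: the labeling map from cycles to the code is injective.\<close>
definition one_to_one ::
  "nat \<Rightarrow> (nat \<Rightarrow> 'v set) \<Rightarrow> (nat \<Rightarrow> ('v \<times> 'a \<times> 'v) set) \<Rightarrow> bool" where
  "one_to_one n V E \<longleftrightarrow>
     (\<forall>v w al be. is_cycle n V E v al \<and> is_cycle n V E w be \<and> (\<forall>i<n. al i = be i)
        \<longrightarrow> (\<forall>i<n. v i = w i))"

definition linear_trellis ::
  "('a, 'c) ring_scheme \<Rightarrow> nat \<Rightarrow> (nat \<Rightarrow> 'v set) \<Rightarrow> (nat \<Rightarrow> ('v \<times> 'a \<times> 'v) set)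
     \<Rightarrow> (nat \<Rightarrow> ('a, 'v) module) \<Rightarrow> bool" where
  "linear_trellis R n V E M \<longleftrightarrow>
     trellis R n V E \<and>
     (\<forall>i<n. module R (M i) \<and> carrier (M i) = V i) \<and>
     (\<forall>i<n. (\<zero>\<^bsub>M i\<^esub>, \<zero>\<^bsub>R\<^esub>, \<zero>\<^bsub>M ((i + 1) mod n)\<^esub>) \<in> E i) \<and>
     (\<forall>i<n. \<forall>v a w v' a' w'. (v, a, w) \<in> E i \<longrightarrow> (v', a', w') \<in> E i \<longrightarrow>
        (v \<oplus>\<^bsub>M i\<^esub> v', a \<oplus>\<^bsub>R\<^esub> a', w \<oplus>\<^bsub>M ((i + 1) mod n)\<^esub> w') \<in> E i) \<and>
     (\<forall>i<n. \<forall>c v a w. c \<in> carrier R \<longrightarrow> (v, a, w) \<in> E i \<longrightarrow>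
        (c \<odot>\<^bsub>M i\<^esub> v, c \<otimes>\<^bsub>R\<^esub> a, c \<odot>\<^bsub>M ((i + 1) mod n)\<^esub> w) \<in> E i)"

definition trellis_iso ::
  "nat \<Rightarrow> (nat \<Rightarrow> 'v set) \<Rightarrow> (nat \<Rightarrow> ('v \<times> 'a \<times> 'v) set)
     \<Rightarrow> (nat \<Rightarrow> 'w set) \<Rightarrow> (nat \<Rightarrow> ('w \<times> 'a \<times> 'w) set) \<Rightarrow> (nat \<Rightarrow> 'v \<Rightarrow> 'w) \<Rightarrow> bool" where
  "trellis_iso n V E V' E' f \<longleftrightarrow>
     (\<forall>i<n. bij_betw (f i) (V i) (V' i)) \<and>
     (\<forall>i<n. \<forall>v\<in>V i. \<forall>a. \<forall>w\<in>V ((i + 1) mod n).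
        (v, a, w) \<in> E i \<longleftrightarrow> (f i v, a, f ((i + 1) mod n) w) \<in> E' i)"

definition linear_map ::
  "('a, 'c) ring_scheme \<Rightarrow> ('a, 'v) module \<Rightarrow> ('a, 'w) module \<Rightarrow> ('v \<Rightarrow> 'w) \<Rightarrow> bool" where
  "linear_map R M N g \<longleftrightarrow>
     (\<forall>x\<in>carrier M. g x \<in> carrier N) \<and>
     (\<forall>x\<in>carrier M. \<forall>y\<in>carrier M. g (x \<oplus>\<^bsub>M\<^esub> y) = g x \<oplus>\<^bsub>N\<^esub> g y) \<and>
     (\<forall>c\<in>carrier R. \<forall>x\<in>carrier M. g (c \<odot>\<^bsub>M\<^esub> x) = c \<odot>\<^bsub>N\<^esub> g x)"

end

theory Submission
  imports Defs
begin

(* In a linear trellis the cycles are closed under vertexwise addition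
   and scalar multiplication (with the labels added, resp. scaled), and an
   isomorphism of trellises maps cycles to cycles with the same label sequence.
   Let x, y be vertices at time i of a reduced trellis T; being reduced, x and y lie
   on cycles (v, al) and (w, be).  Then f(v + w) and f(v) + f(w) are two cycles of T'
   with the same label sequence al + be, so by one-to-one-ness of T' they agree at
   time i, i.e. f_i(x + y) = f_i(x) + f_i(y); scalar multiplication is analogous.
   The argument does not use that R is a finite field, that T is one-to-one or
   that T' is reduced. *)

lemma trellis_length_pos:
  assumes "trellis R n V E"
  shows "n \<ge> 1"
  using assms by (simp add: trellis_def)

lemma trellis_edges_subset:
  assumes "trellis R n V E" "i < n"
  shows "E i \<subseteq> V i \<times> carrier R \<times> V ((i + 1) mod n)"
  using assms by (simp add: trellis_def)

lemma trellis_out_edge: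
  assumes "trellis R n V E" "i < n" "x \<in> V i"
  obtains a w where "(x, a, w) \<in> E i"
  using assms unfolding trellis_def by blast

lemma linear_trellis_trellis:
  assumes "linear_trellis R n V E M"
  shows "trellis R n V E"
  using assms by (simp add: linear_trellis_def)

lemma linear_trellis_carrier:
  assumes "linear_trellis R n V E M" "i < n"
  shows "carrier (M i) = V i"
  using assms by (simp add: linear_trellis_def)

lemma linear_trellis_edge_add:
  assumes "linear_trellis R n V E M" "i < n" "(v, a, w) \<in> E i" "(v', a', w') \<in> E i"
  shows "(v \<oplus>\<^bsub>M i\<^esub> v', a \<oplus>\<^bsub>R\<^esub> a', w \<oplus>\<^bsub>M ((i + 1) mod n)\<^esub> w') \<in> E i"
  using assms unfolding linear_trellis_def by blast

lemma linear_trellis_edge_smult: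
  assumes "linear_trellis R n V E M" "i < n" "c \<in> carrier R" "(v, a, w) \<in> E i"
  shows "(c \<odot>\<^bsub>M i\<^esub> v, c \<otimes>\<^bsub>R\<^esub> a, c \<odot>\<^bsub>M ((i + 1) mod n)\<^esub> w) \<in> E i"
  using assms unfolding linear_trellis_def by blast

lemma trellis_iso_bij:
  assumes "trellis_iso n V E V' E' f" "i < n"
  shows "bij_betw (f i) (V i) (V' i)"
  using assms by (simp add: trellis_iso_def)

lemma one_to_one_same_labels:
  assumes "one_to_one n V E" "is_cycle n V E v al" "is_cycle n V E w al" "i < n"
  shows "v i = w i"
  using assms unfolding one_to_one_def by blast

lemma cycle_add:
  assumes lt: "linear_trellis R n V E M"
    and cv: "is_cycle n V E v al" and cw: "is_cycle n V E w be"
  shows "is_cycle n V E (\<lambda>j. v j \<oplus>\<^bsub>M j\<^esub> w j) (\<lambda>j. al j \<oplus>\<^bsub>R\<^esub> be j)"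
  unfolding is_cycle_def
proof (intro allI impI conjI)
  fix i assume i: "i < n"
  from cv cw i show e: "(v i \<oplus>\<^bsub>M i\<^esub> w i, al i \<oplus>\<^bsub>R\<^esub> be i,
      v ((i + 1) mod n) \<oplus>\<^bsub>M ((i + 1) mod n)\<^esub> w ((i + 1) mod n)) \<in> E i"
    by (intro linear_trellis_edge_add[OF lt i]) (simp_all add: is_cycle_def)
  with trellis_edges_subset[OF linear_trellis_trellis[OF lt] i]
  show "v i \<oplus>\<^bsub>M i\<^esub> w i \<in> V i" by blast
qed

lemma cycle_smult:
  assumes lt: "linear_trellis R n V E M"
    and cv: "is_cycle n V E v al" and c: "c \<in> carrier R"
  shows "is_cycle n V E (\<lambda>j. c \<odot>\<^bsub>M j\<^esub> v j) (\<lambda>j. c \<otimes>\<^bsub>R\<^esub> al j)"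
  unfolding is_cycle_def
proof (intro allI impI conjI)
  fix i assume i: "i < n"
  from cv i show e: "(c \<odot>\<^bsub>M i\<^esub> v i, c \<otimes>\<^bsub>R\<^esub> al i,
      c \<odot>\<^bsub>M ((i + 1) mod n)\<^esub> v ((i + 1) mod n)) \<in> E i"
    by (intro linear_trellis_edge_smult[OF lt i c]) (simp add: is_cycle_def)
  with trellis_edges_subset[OF linear_trellis_trellis[OF lt] i]
  show "c \<odot>\<^bsub>M i\<^esub> v i \<in> V i" by blast
qed

lemma trellis_iso_cycle:
  assumes T: "trellis R n V E" and iso: "trellis_iso n V E V' E' f"
    and cv: "is_cycle n V E v al"
  shows "is_cycle n V' E' (\<lambda>j. f j (v j)) al"
  unfolding is_cycle_def
proof (intro allI impI conjI)
  fix i assume i: "i < n"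
  have i': "(i + 1) mod n < n" using trellis_length_pos[OF T] by simp
  from cv i i' have e: "(v i, al i, v ((i + 1) mod n)) \<in> E i"
    and vi: "v i \<in> V i" and vi': "v ((i + 1) mod n) \<in> V ((i + 1) mod n)"
    by (simp_all add: is_cycle_def)
  from vi show "f i (v i) \<in> V' i"
    using trellis_iso_bij[OF iso i] by (metis bij_betwE)
  from iso i vi vi' e
  show "(f i (v i), al i, f ((i + 1) mod n) (v ((i + 1) mod n))) \<in> E' i"
    unfolding trellis_iso_def by blast
qed

lemma reduced_vertex_on_cycle:
  assumes T: "trellis R n V E" and red: "reduced n V E"
    and i: "i < n" and x: "x \<in> V i"
  obtains v al where "is_cycle n V E v al" "v i = x"
proof -
  obtain a w where e: "(x, a, w) \<in> E i"
    using trellis_out_edge[OF T i x] .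
  from red e i obtain v al where
    "is_cycle n V E v al" "(x, a, w) = (v i, al i, v ((i + 1) mod n))"
    unfolding reduced_def by blast
  then show ?thesis using that by simp
qed

lemma trellis_iso_additive:
  assumes lt: "linear_trellis R n V E M" and red: "reduced n V E"
    and lt': "linear_trellis R n V' E' M'" and oto': "one_to_one n V' E'"
    and iso: "trellis_iso n V E V' E' f"
    and i: "i < n" and x: "x \<in> V i" and y: "y \<in> V i"
  shows "f i (x \<oplus>\<^bsub>M i\<^esub> y) = f i x \<oplus>\<^bsub>M' i\<^esub> f i y"
proof -
  note T = linear_trellis_trellis[OF lt]
  obtain v al where cv: "is_cycle n V E v al" and vx: "v i = x"
    using reduced_vertex_on_cycle[OF T red i x] .
  obtain w be where cw: "is_cycle n V E w be" and wy: "w i = y"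
    using reduced_vertex_on_cycle[OF T red i y] .
  have image_of_sum:
    "is_cycle n V' E' (\<lambda>j. f j (v j \<oplus>\<^bsub>M j\<^esub> w j)) (\<lambda>j. al j \<oplus>\<^bsub>R\<^esub> be j)"
    using trellis_iso_cycle[OF T iso cycle_add[OF lt cv cw]] .
  have sum_of_images:
    "is_cycle n V' E' (\<lambda>j. f j (v j) \<oplus>\<^bsub>M' j\<^esub> f j (w j)) (\<lambda>j. al j \<oplus>\<^bsub>R\<^esub> be j)"
    using cycle_add[OF lt' trellis_iso_cycle[OF T iso cv] trellis_iso_cycle[OF T iso cw]] .
  show ?thesis
    using one_to_one_same_labels[OF oto' image_of_sum sum_of_images i] vx wy by simp
qed

lemma trellis_iso_homogeneous:
  assumes lt: "linear_trellis R n V E M" and red: "reduced n V E"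
    and lt': "linear_trellis R n V' E' M'" and oto': "one_to_one n V' E'"
    and iso: "trellis_iso n V E V' E' f"
    and i: "i < n" and c: "c \<in> carrier R" and x: "x \<in> V i"
  shows "f i (c \<odot>\<^bsub>M i\<^esub> x) = c \<odot>\<^bsub>M' i\<^esub> f i x"
proof -
  note T = linear_trellis_trellis[OF lt]
  obtain v al where cv: "is_cycle n V E v al" and vx: "v i = x"
    using reduced_vertex_on_cycle[OF T red i x] .
  have image_of_multiple:
    "is_cycle n V' E' (\<lambda>j. f j (c \<odot>\<^bsub>M j\<^esub> v j)) (\<lambda>j. c \<otimes>\<^bsub>R\<^esub> al j)"
    using trellis_iso_cycle[OF T iso cycle_smult[OF lt cv c]] .
  have multiple_of_image:
    "is_cycle n V' E' (\<lambda>j. c \<odot>\<^bsub>M' j\<^esub> f j (v j)) (\<lambda>j. c \<otimes>\<^bsub>R\<^esub> al j)"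
    using cycle_smult[OF lt' trellis_iso_cycle[OF T iso cv] c] .
  show ?thesis
    using one_to_one_same_labels[OF oto' image_of_multiple multiple_of_image i] vx by simp
qed

theorem mainTheorem7:
  fixes R :: "('a, 'c) ring_scheme"
    and n :: nat
    and V :: "nat \<Rightarrow> 'v set" and E :: "nat \<Rightarrow> ('v \<times> 'a \<times> 'v) set"
    and M :: "nat \<Rightarrow> ('a, 'v) module"
    and V' :: "nat \<Rightarrow> 'w set" and E' :: "nat \<Rightarrow> ('w \<times> 'a \<times> 'w) set"
    and M' :: "nat \<Rightarrow> ('a, 'w) module"
    and f :: "nat \<Rightarrow> 'v \<Rightarrow> 'w"
  assumes "field R" and "finite (carrier R)"
    and "linear_trellis R n V E M" and "reduced n V E" and "one_to_one n V E"
    and "linear_trellis R n V' E' M'" and "reduced n V' E'" and "one_to_one n V' E'"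
    and "trellis_iso n V E V' E' f"
  shows "\<forall>i<n. linear_map R (M i) (M' i) (f i)"
proof (intro allI impI)
  fix i assume i: "i < n"
  note lt = assms(3) and red = assms(4) and lt' = assms(6) and oto' = assms(8)
    and iso = assms(9)
  have maps_into: "\<forall>x\<in>V i. f i x \<in> V' i"
    using trellis_iso_bij[OF iso i] by (metis bij_betwE)
  show "linear_map R (M i) (M' i) (f i)"
    unfolding linear_map_def linear_trellis_carrier[OF lt i] linear_trellis_carrier[OF lt' i]
    using maps_into trellis_iso_additive[OF lt red lt' oto' iso i]
      trellis_iso_homogeneous[OF lt red lt' oto' iso i]
    by blast
qed

end
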